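(* Let $\alpha_1,\dots,\alpha_4$ be constants, $H=H(t,t^-,q,q^-,p,p^-)$ smooth, and $X=\xi(t)\partial_t+\eta(t,q,p)\partial_q+\nu(t,q,p)\partial_p$ with $\xi(t)=\alpha t+f(t)$, where $\alpha$ is a constant and $f$ is $\tau$-periodic. Then, with $\dot\xi=D(\xi)$, $$\frac{\delta\Omega}{\delta p}\equiv X\Big(\frac{\delta\tilde H}{\delta p}\Big)+\frac{\partial\eta}{\partial p}\frac{\delta\tilde H}{\delta q}+\Big(\frac{\partial\nu}{\partial p}+\dot\xi\Big)\frac{\delta\tilde H}{\delta p},$$ $$\frac{\delta\Omega}{\delta q}\equiv X\Big(\frac{\delta\tilde H}{\delta q}\Big)+\Big(\frac{\partial\eta}{\partial q}+\dot\xi\Big)\frac{\delta\tilde H}{\delta q}+\frac{\partial\nu}{\partial q}\frac{\delta\tilde H}{\delta p},$$ $$\frac{\delta\Omega}{\delta t}\equiv X\Big(\frac{\delta\tilde H}{\delta t}\Big)+2\dot\xi\frac{\delta\tilde H}{\delta t}+\frac{\partial\eta}{\partial t}\frac{\delta\tilde H}{\delta q}+\frac{\partial\nu}{\partial t}\frac{\delta\tilde H}{\delta p}.$$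
   Context: Constant delay $\tau>0$; $t^\pm=t\pm\tau$, $f^\pm=f(t\pm\tau)$; scalar $q,p$. $S_\pm$: forward/backward shift operators on expressions ($S_+$ sends $t^-,t,q^-,q,p^-,p,\dot q^-,\dots$ to $t,t^+,q,q^+,p,p^+,\dot q,\dots$); $\xi^\pm=S_\pm(\xi)$ etc.; $H^+=S_+(H)$. $D=\partial_t+\dot q\partial_q+\dot p\partial_p+\ddot q\partial_{\dot q}+\ddot p\partial_{\dot p}+\cdots$ plus analogous terms for variables at $t^-$ and $t^+$. $\tilde H=p^{-}(\alpha_{1}\dot{q}+\alpha_{2}\dot{q}^{-})+p(\alpha_{3}\dot{q}+\alpha_{4}\dot{q}^{-})-H$. For a function $F$ of $(t,t^-,q,q^-,p,p^-,\dot q,\dot q^-,\dot p,\dot p^-)$ the variational operators are $\frac{\delta F}{\delta p}=\frac{\partial F}{\partial p}-D\frac{\partial F}{\partial\dot p}+S_+\Big(\frac{\partial F}{\partial p^-}-D\frac{\partial F}{\partial\dot p^-}\Big)$, $\frac{\delta F}{\delta q}=\frac{\partial F}{\partial q}-D\frac{\partial F}{\partial\dot q}+S_+\Big(\frac{\partial F}{\partial q^-}-D\frac{\partial F}{\partial\dot q^-}\Big)$, $\frac{\delta F}{\delta t}=\frac{\partial F}{\partial t}+D\Big(\dot q\frac{\partial F}{\partial\dot q}+\dot p\frac{\partial F}{\partial\dot p}\Big)+S_+\Big(\frac{\partial F}{\partial t^-}+D\Big(\dot q^-\frac{\partial F}{\partial\dot q^-}+\dot p^-\frac{\partial F}{\partial\dot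 p^-}\Big)\Big)-D(F)$. In particular $\frac{\delta\tilde H}{\delta p}=\alpha_1\dot q^++(\alpha_2+\alpha_3)\dot q+\alpha_4\dot q^--\partial_p(H+H^+)$, $\frac{\delta\tilde H}{\delta q}=-(\alpha_4\dot p^++(\alpha_2+\alpha_3)\dot p+\alpha_1\dot p^-+\partial_q(H+H^+))$, $\frac{\delta\tilde H}{\delta t}=D[\alpha_2(p\dot q-p^-\dot q^-)+\alpha_4(p^+\dot q-p\dot q^-)]+D(H)-\partial_t(H+H^+)$. $\Omega=X(\tilde H)+\tilde HD(\xi)=\nu^{-}(\alpha_{1}\dot{q}+\alpha_{2}\dot{q}^{-})+p^{-}(\alpha_{1}D(\eta)+\alpha_{2}D(\eta^{-}))+\nu(\alpha_{3}\dot{q}+\alpha_{4}\dot{q}^{-})+p(\alpha_{3}D(\eta)+\alpha_{4}D(\eta^{-}))+(\alpha_{2}p^{-}+\alpha_{4}p)\dot{q}^{-}D(\xi-\xi^{-})-\xi H_t-\eta H_q-\nu H_p-\xi^{-}H_{t^-}-\eta^{-}H_{q^-}-\nu^{-}H_{p^-}-HD(\xi)$. $X$ is prolonged to all variables at $t^-,t,t^+$ and their derivatives by the standard prolongation formulas: coefficient of $\partial_{\dot q}$ is $D(\eta)-\dot qD(\xi)$, of $\partial_{\dot p}$ is $D(\nu)-\dot pD(\xi)$, of $\partial_{\ddot q}$ is $D(D(\eta)-\dot qD(\xi))-\ddot qD(\xi)$, etc., and the shifted variables carry the shifted coefficients $S_\pm(\cdot)$. Variables are considered with the delay equation $t^+-t=t-t^-=\tau$.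 *)

theory Defs
  imports "HOL-Analysis.Analysis"
begin

fun Ck :: "nat \<Rightarrow> ('a::euclidean_space \<Rightarrow> real) \<Rightarrow> bool" where
  "Ck 0 g = continuous_on UNIV g"
| "Ck (Suc k) g = (g differentiable_on UNIV \<and>
      (\<forall>b\<in>Basis. Ck k (\<lambda>x. frechet_derivative g (at x) b)))"

definition smooth_fun :: "('a::euclidean_space \<Rightarrow> real) \<Rightarrow> bool" where
  "smooth_fun g = (\<forall>k. Ck k g)"

text \<open>Coordinates: a time level l (l = -1 for t^-, 0 for t, 1 for t^+, ...)
  and a kind: the time variable, the k-th derivative of q, the k-th derivative of p.
  So (0, Qc 0) is q, (-1, Qc 1) is qdot^-, (1, Pc 2) is pddot^+, (-1, Tc) is t^-.\<close>

datatype coord = Tc | Qc nat | Pc nat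

type_synonym jet = "int \<times> coord \<Rightarrow> real"
type_synonym expr = "jet \<Rightarrow> real"

definition pd :: "int \<times> coord \<Rightarrow> expr \<Rightarrow> expr" where
  "pd v F = (\<lambda>z. deriv (\<lambda>s. F (z(v := s))) (z v))"

text \<open>Total derivative D = sum over all levels of
  d_t + qdot d_q + pdot d_p + qddot d_qdot + pddot d_pdot + ...,
  realised as the directional derivative along the vector field with these
  components (each expression depends on finitely many coordinates).\<close>
definition tdir :: "jet \<Rightarrow> jet" where
  "tdir z = (\<lambda>(l, c). case c of Tc \<Rightarrow> 1
                              | Qc k \<Rightarrow> z (l, Qc (Suc k))
                              | Pc k \<Rightarrow> z (l, Pc (Suc k)))"

definition Dt :: "expr \<Rightarrow> expr" where
  "Dt F = (\<lambda>z. deriv (\<lambda>s. F (\<lambda>v. z v + s * tdir z v)) 0)"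

text \<open>Shift of levels; S_+ F = F o shift 1 (sends t^- to t, t to t^+, etc.).\<close>
definition shift :: "int \<Rightarrow> jet \<Rightarrow> jet" where
  "shift n z = (\<lambda>(l, c). z (l + n, c))"

definition Splus :: "expr \<Rightarrow> expr" where
  "Splus F = (\<lambda>z. F (shift 1 z))"

definition xiE :: "(real \<Rightarrow> real) \<Rightarrow> expr" where
  "xiE xi = (\<lambda>z. xi (z (0, Tc)))"

definition tqpE :: "(real \<times> real \<times> real \<Rightarrow> real) \<Rightarrow> expr" where
  "tqpE g = (\<lambda>z. g (z (0, Tc), z (0, Qc 0), z (0, Pc 0)))"

fun prol :: "expr \<Rightarrow> (nat \<Rightarrow> coord) \<Rightarrow> expr \<Rightarrow> nat \<Rightarrow> expr" where
  "prol xE C base 0 = base"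
| "prol xE C base (Suc k) = (\<lambda>z. Dt (prol xE C base k) z - z (0, C (Suc k)) * Dt xE z)"

text \<open>Components of the prolonged vector field at every level; the shifted
  variables carry the shifted coefficients.\<close>
definition Xcoef :: "(real \<Rightarrow> real) \<Rightarrow> (real \<times> real \<times> real \<Rightarrow> real) \<Rightarrow>
    (real \<times> real \<times> real \<Rightarrow> real) \<Rightarrow> jet \<Rightarrow> jet" where
  "Xcoef xi eta nu z = (\<lambda>(l, c). case c of
        Tc \<Rightarrow> xi (z (l, Tc))
      | Qc k \<Rightarrow> prol (xiE xi) Qc (tqpE eta) k (shift l z)
      | Pc k \<Rightarrow> prol (xiE xi) Pc (tqpE nu) k (shift l z))"

definition Xop :: "(real \<Rightarrow> real) \<Rightarrow> (real \<times> real \<times> real \<Rightarrow> real) \<Rightarrow>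
    (real \<times> real \<times> real \<Rightarrow> real) \<Rightarrow> expr \<Rightarrow> expr" where
  "Xop xi eta nu F = (\<lambda>z. deriv (\<lambda>s. F (\<lambda>v. z v + s * Xcoef xi eta nu z v)) 0)"

definition varP :: "expr \<Rightarrow> expr" where
  "varP F = (\<lambda>z. pd (0, Pc 0) F z - Dt (pd (0, Pc 1) F) z
     + Splus (\<lambda>w. pd (-1, Pc 0) F w - Dt (pd (-1, Pc 1) F) w) z)"

definition varQ :: "expr \<Rightarrow> expr" where
  "varQ F = (\<lambda>z. pd (0, Qc 0) F z - Dt (pd (0, Qc 1) F) z
     + Splus (\<lambda>w. pd (-1, Qc 0) F w - Dt (pd (-1, Qc 1) F) w) z)"

definition varT :: "expr \<Rightarrow> expr" where
  "varT F = (\<lambda>z. pd (0, Tc) F z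
     + Dt (\<lambda>w. w (0, Qc 1) * pd (0, Qc 1) F w + w (0, Pc 1) * pd (0, Pc 1) F w) z
     + Splus (\<lambda>w. pd (-1, Tc) F w
          + Dt (\<lambda>u. u (-1, Qc 1) * pd (-1, Qc 1) F u + u (-1, Pc 1) * pd (-1, Pc 1) F u) w) z
     - Dt F z)"

definition Htil :: "real \<Rightarrow> real \<Rightarrow> real \<Rightarrow> real \<Rightarrow>
    (real \<times> real \<times> real \<times> real \<times> real \<times> real \<Rightarrow> real) \<Rightarrow> expr" where
  "Htil a1 a2 a3 a4 H = (\<lambda>z.
      z (-1, Pc 0) * (a1 * z (0, Qc 1) + a2 * z (-1, Qc 1))
    + z (0, Pc 0) * (a3 * z (0, Qc 1) + a4 * z (-1, Qc 1))
    - H (z (0, Tc), z (-1, Tc), z (0, Qc 0), z (-1, Qc 0), z (0, Pc 0), z (-1, Pc 0)))"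

definition Omega :: "(real \<Rightarrow> real) \<Rightarrow> (real \<times> real \<times> real \<Rightarrow> real) \<Rightarrow>
    (real \<times> real \<times> real \<Rightarrow> real) \<Rightarrow> expr \<Rightarrow> expr" where
  "Omega xi eta nu Ht = (\<lambda>z. Xop xi eta nu Ht z + Ht z * Dt (xiE xi) z)"

end

theory Submission
  imports Defs
begin

(* Every expression in the statement (H-tilde, Omega, their variational derivatives and their
   images under the prolonged generator X) is a polynomial in the jet coordinates, the partial
   derivatives of H, eta, nu and the derivatives of f. On such expressions the operators
   pd, D, S_+ and X act by the chain and product rules, so they can be computed on a small term
   language whose symbolic derivative commutes with evaluation. After this reflection each of
   the three identities is a polynomial identity, valid modulo the symmetry of mixed second
   partials (Schwarz's theorem, proved here from the mean value theorem) and
   xi'(t - tau) = xi'(t) = xi'(t + tau); the latter is the only place where xi = alpha t + f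
   with f tau-periodic is used. *)

section \<open>Smooth functions and symmetry of mixed partials\<close>

fun iterated_partial :: "('a::euclidean_space \<Rightarrow> real) \<Rightarrow> 'a list \<Rightarrow> 'a \<Rightarrow> real" where
  "iterated_partial g [] = g"
| "iterated_partial g (b # bs) = iterated_partial (\<lambda>x. frechet_derivative g (at x) b) bs"

lemma iterated_partial_snoc:
  "iterated_partial g (bs @ [b]) = (\<lambda>x. frechet_derivative (iterated_partial g bs) (at x) b)"
  by (induction bs arbitrary: g) auto

lemma smooth_fun_partial:
  assumes "smooth_fun g" and "b \<in> Basis"
  shows "smooth_fun (\<lambda>x. frechet_derivative g (at x) b)"
  unfolding smooth_fun_def
proof
  fix k
  have "Ck (Suc k) g" using assms(1) unfolding smooth_fun_def by blast
  then show "Ck k (\<lambda>x. frechet_derivative g (at x) b)" using assms(2) by simp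
qed

lemma smooth_fun_iterated_partial:
  "smooth_fun g \<Longrightarrow> set bs \<subseteq> Basis \<Longrightarrow> smooth_fun (iterated_partial g bs)"
  by (induction bs arbitrary: g) (auto intro: smooth_fun_partial)

lemma smooth_fun_differentiable: "smooth_fun g \<Longrightarrow> g differentiable (at x)"
  using Ck.simps(2)[of 0 g] unfolding smooth_fun_def differentiable_on_def by blast

lemma smooth_fun_continuous: "smooth_fun g \<Longrightarrow> continuous (at x) g"
  using Ck.simps(1)[of g] unfolding smooth_fun_def by (metis continuous_on_eq_continuous_at open_UNIV UNIV_I)

lemma has_real_derivative_along_line:
  fixes g :: "'a::euclidean_space \<Rightarrow> real"
  assumes "g differentiable (at (y + s *\<^sub>R u))"
  shows "((\<lambda>s. g (y + s *\<^sub>R u)) has_real_derivative frechet_derivative g (at (y + s *\<^sub>R u)) u) (at s)"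
proof -
  let ?g' = "frechet_derivative g (at (y + s *\<^sub>R u))"
  have "(g has_derivative ?g') (at (y + s *\<^sub>R u))"
    using assms frechet_derivative_works by blast
  moreover have "((\<lambda>s. y + s *\<^sub>R u) has_derivative (\<lambda>t. t *\<^sub>R u)) (at s)"
    by (auto intro!: derivative_eq_intros)
  ultimately have "((\<lambda>s. g (y + s *\<^sub>R u)) has_derivative (\<lambda>t. ?g' (t *\<^sub>R u))) (at s)"
    using diff_chain_at by (force simp: o_def)
  moreover have "(\<lambda>t. ?g' (t *\<^sub>R u)) = (*) (?g' u)"
    using linear_scale[OF linear_frechet_derivative[OF assms]] by (auto simp: mult.commute)
  ultimately show ?thesis unfolding has_field_derivative_def by simp
qed

lemma mixed_difference_mean_value:
  fixes g :: "'a::euclidean_space \<Rightarrow> real"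
  assumes g: "smooth_fun g" and b: "b \<in> Basis" and "h > 0"
  obtains \<theta> \<theta>' where "0 < \<theta>" "\<theta> < h" "0 < \<theta>'" "\<theta>' < h"
    and "g (x + h *\<^sub>R c + h *\<^sub>R b) - g (x + h *\<^sub>R c) - (g (x + h *\<^sub>R b) - g x)
       = h * (h * iterated_partial g [b, c] (x + \<theta> *\<^sub>R b + \<theta>' *\<^sub>R c))"
proof -
  define gb where "gb = (\<lambda>y. frechet_derivative g (at y) b)"
  have "smooth_fun gb" unfolding gb_def using g b by (rule smooth_fun_partial)
  have "DERIV (\<lambda>u. g (x + h *\<^sub>R c + u *\<^sub>R b) - g (x + u *\<^sub>R b)) u :>
        gb (x + h *\<^sub>R c + u *\<^sub>R b) - gb (x + u *\<^sub>R b)" for u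
    unfolding gb_def by (intro DERIV_diff has_real_derivative_along_line smooth_fun_differentiable[OF g])
  from MVT2[OF \<open>h > 0\<close> this] obtain \<theta> where \<theta>: "0 < \<theta>" "\<theta> < h" and
    first: "g (x + h *\<^sub>R c + h *\<^sub>R b) - g (x + h *\<^sub>R b) - (g (x + h *\<^sub>R c) - g x)
       = h * (gb (x + h *\<^sub>R c + \<theta> *\<^sub>R b) - gb (x + \<theta> *\<^sub>R b))"
    by auto
  have "DERIV (\<lambda>v. gb (x + \<theta> *\<^sub>R b + v *\<^sub>R c)) v :>
        frechet_derivative gb (at (x + \<theta> *\<^sub>R b + v *\<^sub>R c)) c" for v
    by (intro has_real_derivative_along_line smooth_fun_differentiable[OF \<open>smooth_fun gb\<close>])
  from MVT2[OF \<open>h > 0\<close> this] obtain \<theta>' where \<theta>': "0 < \<theta>'" "\<theta>' < h" and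
    second: "gb (x + \<theta> *\<^sub>R b + h *\<^sub>R c) - gb (x + \<theta> *\<^sub>R b)
       = h * iterated_partial g [b, c] (x + \<theta> *\<^sub>R b + \<theta>' *\<^sub>R c)"
    by (auto simp: gb_def)
  have "x + h *\<^sub>R c + \<theta> *\<^sub>R b = x + \<theta> *\<^sub>R b + h *\<^sub>R c" by (simp add: algebra_simps)
  with first second show thesis
    using that \<theta> \<theta>' by (simp add: algebra_simps)
qed

lemma iterated_partial_commute:
  fixes g :: "'a::euclidean_space \<Rightarrow> real"
  assumes g: "smooth_fun g" and b: "b \<in> Basis" and c: "c \<in> Basis"
  shows "iterated_partial g [b, c] = iterated_partial g [c, b]"
proof
  fix x
  let ?P = "iterated_partial g [b, c]" and ?Q = "iterated_partial g [c, b]"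
  show "?P x = ?Q x"
  proof (rule ccontr)
    define \<epsilon> where "\<epsilon> = \<bar>?P x - ?Q x\<bar> / 3"
    assume "?P x \<noteq> ?Q x"
    then have "\<epsilon> > 0" by (simp add: \<epsilon>_def)
    have "smooth_fun ?P" "smooth_fun ?Q"
      using smooth_fun_iterated_partial[OF g, of "[b, c]"] smooth_fun_iterated_partial[OF g, of "[c, b]"] b c
      by (auto simp del: iterated_partial.simps)
    then have "continuous (at x) ?P" "continuous (at x) ?Q"
      by (auto intro: smooth_fun_continuous)
    with \<open>\<epsilon> > 0\<close> obtain \<delta>P \<delta>Q where "\<delta>P > 0" "\<delta>Q > 0"
      and \<delta>P: "\<And>y. dist y x < \<delta>P \<Longrightarrow> dist (?P y) (?P x) < \<epsilon>"
      and \<delta>Q: "\<And>y. dist y x < \<delta>Q \<Longrightarrow> dist (?Q y) (?Q x) < \<epsilon>"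
      unfolding continuous_at_eps_delta by metis
    define h where "h = min \<delta>P \<delta>Q / 2"
    have "h > 0" using \<open>\<delta>P > 0\<close> \<open>\<delta>Q > 0\<close> by (simp add: h_def)
    have near: "dist (x + s *\<^sub>R d + t *\<^sub>R e) x < 2 * h"
      if "d \<in> Basis" "e \<in> Basis" "0 < s" "s < h" "0 < t" "t < h" for d e s t
      using norm_triangle_ineq[of "s *\<^sub>R d" "t *\<^sub>R e"] that by (simp add: dist_norm)
    obtain s s' where s: "0 < s" "s < h" "0 < s'" "s' < h" and
      P: "g (x + h *\<^sub>R c + h *\<^sub>R b) - g (x + h *\<^sub>R c) - (g (x + h *\<^sub>R b) - g x)
        = h * (h * ?P (x + s *\<^sub>R b + s' *\<^sub>R c))"
      using mixed_difference_mean_value[OF g b \<open>h > 0\<close>] by blast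
    obtain t t' where t: "0 < t" "t < h" "0 < t'" "t' < h" and
      Q: "g (x + h *\<^sub>R b + h *\<^sub>R c) - g (x + h *\<^sub>R b) - (g (x + h *\<^sub>R c) - g x)
        = h * (h * ?Q (x + t *\<^sub>R c + t' *\<^sub>R b))"
      using mixed_difference_mean_value[OF g c \<open>h > 0\<close>] by blast
    have "x + h *\<^sub>R c + h *\<^sub>R b = x + h *\<^sub>R b + h *\<^sub>R c" by (simp add: algebra_simps)
    with P Q \<open>h > 0\<close> have "?P (x + s *\<^sub>R b + s' *\<^sub>R c) = ?Q (x + t *\<^sub>R c + t' *\<^sub>R b)"
      by (simp add: algebra_simps)
    moreover have "dist (?P (x + s *\<^sub>R b + s' *\<^sub>R c)) (?P x) < \<epsilon>"
      using \<delta>P near[OF b c s] by (simp add: h_def)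
    moreover have "dist (?Q (x + t *\<^sub>R c + t' *\<^sub>R b)) (?Q x) < \<epsilon>"
      using \<delta>Q near[OF c b t] by (simp add: h_def)
    ultimately show False unfolding \<epsilon>_def dist_real_def by (simp add: abs_if split: if_split_asm)
  qed
qed

section \<open>Derivatives of periodic functions and coordinate partials\<close>

definition higher_deriv :: "nat \<Rightarrow> (real \<Rightarrow> real) \<Rightarrow> real \<Rightarrow> real" where
  "higher_deriv k f = (deriv ^^ k) f"

lemma deriv_eq_frechet_derivative_one:
  fixes g :: "real \<Rightarrow> real"
  assumes "g differentiable (at x)"
  shows "deriv g x = frechet_derivative g (at x) 1"
proof -
  have "(g has_derivative (*) (deriv g x)) (at x)"
    using assms DERIV_deriv_iff_real_differentiable has_field_derivative_def by blast
  then have "(*) (deriv g x) = frechet_derivative g (at x)"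
    by (rule frechet_derivative_at)
  then show ?thesis by (metis mult.right_neutral)
qed

lemma smooth_fun_deriv:
  fixes g :: "real \<Rightarrow> real"
  assumes "smooth_fun g"
  shows "smooth_fun (deriv g)"
proof -
  have "deriv g = (\<lambda>x. frechet_derivative g (at x) 1)"
    using assms deriv_eq_frechet_derivative_one smooth_fun_differentiable by blast
  with smooth_fun_partial[OF assms] show ?thesis by simp
qed

lemma smooth_fun_higher_deriv: "smooth_fun f \<Longrightarrow> smooth_fun (higher_deriv k f)"
  by (induction k) (auto simp: higher_deriv_def intro: smooth_fun_deriv)

lemma DERIV_higher_deriv:
  assumes "smooth_fun f"
  shows "DERIV (higher_deriv k f) x :> higher_deriv (Suc k) f x"
proof -
  have "higher_deriv k f differentiable (at x)"
    using assms smooth_fun_higher_deriv smooth_fun_differentiable by blast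
  then show ?thesis
    using DERIV_deriv_iff_real_differentiable by (simp add: higher_deriv_def)
qed

lemma deriv_periodic:
  fixes g :: "real \<Rightarrow> real"
  assumes "\<And>t. g (t + \<tau>) = g t" and "\<And>x. g differentiable (at x)"
  shows "deriv g (t + \<tau>) = deriv g t"
proof -
  have "DERIV g (t + \<tau>) :> deriv g (t + \<tau>)"
    using assms(2) DERIV_deriv_iff_real_differentiable by blast
  then have "DERIV (\<lambda>x. g (x + \<tau>)) t :> deriv g (t + \<tau>)"
    using DERIV_shift by blast
  then show ?thesis using assms(1) DERIV_imp_deriv by fastforce
qed

lemma higher_deriv_periodic:
  assumes "smooth_fun f" and "\<forall>t. f (t + \<tau>) = f t"
  shows "higher_deriv k f (t + \<tau>) = higher_deriv k f t"
proof (induction k arbitrary: t)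
  case 0
  then show ?case using assms(2) by (simp add: higher_deriv_def)
next
  case (Suc k)
  have "\<And>x. higher_deriv k f differentiable (at x)"
    using assms(1) smooth_fun_higher_deriv smooth_fun_differentiable by blast
  with Suc.IH show ?case
    using deriv_periodic[of "higher_deriv k f"] by (simp add: higher_deriv_def)
qed

corollary higher_deriv_periodic_minus:
  assumes "smooth_fun f" and "\<forall>t. f (t + \<tau>) = f t"
  shows "higher_deriv k f (t - \<tau>) = higher_deriv k f t"
  using higher_deriv_periodic[OF assms, of k "t - \<tau>"] by simp

type_synonym real6 = "real \<times> real \<times> real \<times> real \<times> real \<times> real"
type_synonym real3 = "real \<times> real \<times> real"

definition basis6 :: "nat \<Rightarrow> real6" where
  "basis6 i = (if i = 0 then (1,0,0,0,0,0) else if i = 1 then (0,1,0,0,0,0)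
     else if i = 2 then (0,0,1,0,0,0) else if i = 3 then (0,0,0,1,0,0)
     else if i = 4 then (0,0,0,0,1,0) else (0,0,0,0,0,1))"

definition basis3 :: "nat \<Rightarrow> real3" where
  "basis3 i = (if i = 0 then (1,0,0) else if i = 1 then (0,1,0) else (0,0,1))"

lemma range_basis6: "range basis6 \<subseteq> Basis"
  by (auto simp: basis6_def Basis_prod_def zero_prod_def)

lemma range_basis3: "range basis3 \<subseteq> Basis"
  by (auto simp: basis3_def Basis_prod_def zero_prod_def)

lemma linear_real6_expansion:
  assumes "linear L"
  shows "L (u1,u2,u3,u4,u5,u6) = u1 * L (basis6 0) + u2 * L (basis6 1) + u3 * L (basis6 2)
     + u4 * L (basis6 3) + u5 * L (basis6 4) + u6 * L (basis6 5)"
proof -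
  have "(u1,u2,u3,u4,u5,u6) = u1 *\<^sub>R basis6 0 + u2 *\<^sub>R basis6 1 + u3 *\<^sub>R basis6 2
      + u4 *\<^sub>R basis6 3 + u5 *\<^sub>R basis6 4 + u6 *\<^sub>R basis6 5"
    by (simp add: basis6_def)
  then show ?thesis using assms by (simp add: linear_add linear_scale)
qed

lemma linear_real3_expansion:
  assumes "linear L"
  shows "L (u1,u2,u3) = u1 * L (basis3 0) + u2 * L (basis3 1) + u3 * L (basis3 2)"
proof -
  have "(u1,u2,u3) = u1 *\<^sub>R basis3 0 + u2 *\<^sub>R basis3 1 + u3 *\<^sub>R basis3 2"
    by (simp add: basis3_def)
  then show ?thesis using assms by (simp add: linear_add linear_scale)
qed

definition coord_partial ::
    "(nat \<Rightarrow> 'a::euclidean_space) \<Rightarrow> ('a \<Rightarrow> real) \<Rightarrow> nat list \<Rightarrow> 'a \<Rightarrow> real" where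
  "coord_partial e g ms = iterated_partial g (map e ms)"

lemma coord_partial_Nil [simp]: "coord_partial e g [] = g"
  by (simp add: coord_partial_def)

lemma coord_partial_snoc:
  "frechet_derivative (coord_partial e g ms) (at y) (e i) = coord_partial e g (ms @ [i]) y"
  by (simp add: coord_partial_def iterated_partial_snoc)

lemma smooth_fun_coord_partial:
  "range e \<subseteq> Basis \<Longrightarrow> smooth_fun g \<Longrightarrow> smooth_fun (coord_partial e g ms)"
  unfolding coord_partial_def by (rule smooth_fun_iterated_partial) auto

lemma coord_partial_commute:
  "range e \<subseteq> Basis \<Longrightarrow> smooth_fun g \<Longrightarrow> coord_partial e g [i, j] = coord_partial e g [j, i]"
  unfolding coord_partial_def using iterated_partial_commute[of g "e i" "e j"] by auto

lemma DERIV_coord_partial6: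
  assumes "smooth_fun H"
  shows "DERIV (\<lambda>s. coord_partial basis6 H ms (a + s *\<^sub>R (u1,u2,u3,u4,u5,u6))) s :>
      u1 * coord_partial basis6 H (ms @ [0]) (a + s *\<^sub>R (u1,u2,u3,u4,u5,u6))
    + u2 * coord_partial basis6 H (ms @ [1]) (a + s *\<^sub>R (u1,u2,u3,u4,u5,u6))
    + u3 * coord_partial basis6 H (ms @ [2]) (a + s *\<^sub>R (u1,u2,u3,u4,u5,u6))
    + u4 * coord_partial basis6 H (ms @ [3]) (a + s *\<^sub>R (u1,u2,u3,u4,u5,u6))
    + u5 * coord_partial basis6 H (ms @ [4]) (a + s *\<^sub>R (u1,u2,u3,u4,u5,u6))
    + u6 * coord_partial basis6 H (ms @ [5]) (a + s *\<^sub>R (u1,u2,u3,u4,u5,u6))"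
proof -
  have "coord_partial basis6 H ms differentiable (at (a + s *\<^sub>R (u1,u2,u3,u4,u5,u6)))"
    using smooth_fun_differentiable smooth_fun_coord_partial[OF range_basis6 assms] by blast
  from has_real_derivative_along_line[OF this]
    linear_real6_expansion[OF linear_frechet_derivative[OF this]]
  show ?thesis by (simp add: coord_partial_snoc)
qed

lemma DERIV_coord_partial3:
  assumes "smooth_fun g"
  shows "DERIV (\<lambda>s. coord_partial basis3 g ms (a + s *\<^sub>R (u1,u2,u3))) s :>
      u1 * coord_partial basis3 g (ms @ [0]) (a + s *\<^sub>R (u1,u2,u3))
    + u2 * coord_partial basis3 g (ms @ [1]) (a + s *\<^sub>R (u1,u2,u3))
    + u3 * coord_partial basis3 g (ms @ [2]) (a + s *\<^sub>R (u1,u2,u3))"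
proof -
  have "coord_partial basis3 g ms differentiable (at (a + s *\<^sub>R (u1,u2,u3)))"
    using smooth_fun_differentiable smooth_fun_coord_partial[OF range_basis3 assms] by blast
  from has_real_derivative_along_line[OF this]
    linear_real3_expansion[OF linear_frechet_derivative[OF this]]
  show ?thesis by (simp add: coord_partial_snoc)
qed

section \<open>A term language for jet expressions\<close>

(* Hpart ms l is the iterated partial derivative of H in the argument positions ms
   (0..5 for t, t^-, q, q^-, p, p^-) at the arguments of level l; EtaPart and NuPart do the same
   for eta and nu (positions 0..2 for t, q, p); Fderiv k l is the k-th derivative of f at the
   time of level l. *)
datatype jet_term = Lit real | Var "int \<times> coord"
  | Add jet_term jet_term | Sub jet_term jet_term | Mul jet_term jet_term
  | Hpart "nat list" int | EtaPart "nat list" int | NuPart "nat list" int | Fderiv nat int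

definition H_args :: "int \<Rightarrow> jet \<Rightarrow> real6" where
  "H_args l z = (z (l, Tc), z (l - 1, Tc), z (l, Qc 0), z (l - 1, Qc 0), z (l, Pc 0), z (l - 1, Pc 0))"

definition tqp_args :: "int \<Rightarrow> jet \<Rightarrow> real3" where
  "tqp_args l z = (z (l, Tc), z (l, Qc 0), z (l, Pc 0))"

lemma H_args_along_line: "H_args l (\<lambda>v. z v + s * w v) = H_args l z + s *\<^sub>R H_args l w"
  by (simp add: H_args_def)

lemma tqp_args_along_line: "tqp_args l (\<lambda>v. z v + s * w v) = tqp_args l z + s *\<^sub>R tqp_args l w"
  by (simp add: tqp_args_def)

primrec term_val :: "(real6 \<Rightarrow> real) \<Rightarrow> (real3 \<Rightarrow> real) \<Rightarrow> (real3 \<Rightarrow> real) \<Rightarrow> (real \<Rightarrow> real) \<Rightarrow>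
    jet_term \<Rightarrow> expr" where
  "term_val H eta nu f (Lit r) z = r"
| "term_val H eta nu f (Var v) z = z v"
| "term_val H eta nu f (Add a b) z = term_val H eta nu f a z + term_val H eta nu f b z"
| "term_val H eta nu f (Sub a b) z = term_val H eta nu f a z - term_val H eta nu f b z"
| "term_val H eta nu f (Mul a b) z = term_val H eta nu f a z * term_val H eta nu f b z"
| "term_val H eta nu f (Hpart ms l) z = coord_partial basis6 H ms (H_args l z)"
| "term_val H eta nu f (EtaPart ms l) z = coord_partial basis3 eta ms (tqp_args l z)"
| "term_val H eta nu f (NuPart ms l) z = coord_partial basis3 nu ms (tqp_args l z)"
| "term_val H eta nu f (Fderiv k l) z = higher_deriv k f (z (l, Tc))"

(* Derivative along the vector field whose component at the coordinate v is the term W v. *)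
primrec term_deriv :: "(int \<times> coord \<Rightarrow> jet_term) \<Rightarrow> jet_term \<Rightarrow> jet_term" where
  "term_deriv W (Lit r) = Lit 0"
| "term_deriv W (Var v) = W v"
| "term_deriv W (Add a b) = Add (term_deriv W a) (term_deriv W b)"
| "term_deriv W (Sub a b) = Sub (term_deriv W a) (term_deriv W b)"
| "term_deriv W (Mul a b) = Add (Mul (term_deriv W a) b) (Mul a (term_deriv W b))"
| "term_deriv W (Hpart ms l) =
     Add (Mul (W (l, Tc)) (Hpart (ms @ [0]) l)) (Add (Mul (W (l - 1, Tc)) (Hpart (ms @ [1]) l))
    (Add (Mul (W (l, Qc 0)) (Hpart (ms @ [2]) l)) (Add (Mul (W (l - 1, Qc 0)) (Hpart (ms @ [3]) l))
    (Add (Mul (W (l, Pc 0)) (Hpart (ms @ [4]) l)) (Mul (W (l - 1, Pc 0)) (Hpart (ms @ [5]) l))))))"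
| "term_deriv W (EtaPart ms l) =
     Add (Mul (W (l, Tc)) (EtaPart (ms @ [0]) l)) (Add (Mul (W (l, Qc 0)) (EtaPart (ms @ [1]) l))
       (Mul (W (l, Pc 0)) (EtaPart (ms @ [2]) l)))"
| "term_deriv W (NuPart ms l) =
     Add (Mul (W (l, Tc)) (NuPart (ms @ [0]) l)) (Add (Mul (W (l, Qc 0)) (NuPart (ms @ [1]) l))
       (Mul (W (l, Pc 0)) (NuPart (ms @ [2]) l)))"
| "term_deriv W (Fderiv k l) = Mul (W (l, Tc)) (Fderiv (Suc k) l)"

primrec shift_term :: "int \<Rightarrow> jet_term \<Rightarrow> jet_term" where
  "shift_term n (Lit r) = Lit r"
| "shift_term n (Var v) = Var (fst v + n, snd v)"
| "shift_term n (Add a b) = Add (shift_term n a) (shift_term n b)"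
| "shift_term n (Sub a b) = Sub (shift_term n a) (shift_term n b)"
| "shift_term n (Mul a b) = Mul (shift_term n a) (shift_term n b)"
| "shift_term n (Hpart ms l) = Hpart ms (l + n)"
| "shift_term n (EtaPart ms l) = EtaPart ms (l + n)"
| "shift_term n (NuPart ms l) = NuPart ms (l + n)"
| "shift_term n (Fderiv k l) = Fderiv k (l + n)"

lemma term_val_term_deriv_cong:
  "(\<And>v. term_val H eta nu f (W v) z = term_val H eta nu f (W' v) z) \<Longrightarrow>
   term_val H eta nu f (term_deriv W e) z = term_val H eta nu f (term_deriv W' e) z"
  by (induction e) auto

lemma term_val_shift_term: "term_val H eta nu f (shift_term n e) z = term_val H eta nu f e (shift n z)"
  by (induction e) (auto simp: shift_def H_args_def tqp_args_def algebra_simps split: prod.splits)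

definition coord_field :: "int \<times> coord \<Rightarrow> int \<times> coord \<Rightarrow> jet_term" where
  "coord_field x = (\<lambda>v. Lit (if v = x then 1 else 0))"

definition total_field :: "int \<times> coord \<Rightarrow> jet_term" where
  "total_field = (\<lambda>(l, c). case c of Tc \<Rightarrow> Lit 1
      | Qc k \<Rightarrow> Var (l, Qc (Suc k)) | Pc k \<Rightarrow> Var (l, Pc (Suc k)))"

definition xi_term :: "real \<Rightarrow> int \<Rightarrow> jet_term" where
  "xi_term \<alpha> l = Add (Mul (Lit \<alpha>) (Var (l, Tc))) (Fderiv 0 l)"

primrec prol_term :: "real \<Rightarrow> (nat \<Rightarrow> coord) \<Rightarrow> jet_term \<Rightarrow> nat \<Rightarrow> jet_term" where
  "prol_term \<alpha> C b 0 = b"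
| "prol_term \<alpha> C b (Suc k) =
     Sub (term_deriv total_field (prol_term \<alpha> C b k))
       (Mul (Var (0, C (Suc k))) (term_deriv total_field (xi_term \<alpha> 0)))"

definition symmetry_field :: "real \<Rightarrow> int \<times> coord \<Rightarrow> jet_term" where
  "symmetry_field \<alpha> = (\<lambda>(l, c). case c of Tc \<Rightarrow> xi_term \<alpha> l
      | Qc k \<Rightarrow> shift_term l (prol_term \<alpha> Qc (EtaPart [] 0) k)
      | Pc k \<Rightarrow> shift_term l (prol_term \<alpha> Pc (NuPart [] 0) k))"

definition Htil_term :: "real \<Rightarrow> real \<Rightarrow> real \<Rightarrow> real \<Rightarrow> jet_term" where
  "Htil_term a1 a2 a3 a4 =
     Sub (Add (Mul (Var (-1, Pc 0)) (Add (Mul (Lit a1) (Var (0, Qc 1))) (Mul (Lit a2) (Var (-1, Qc 1)))))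
       (Mul (Var (0, Pc 0)) (Add (Mul (Lit a3) (Var (0, Qc 1))) (Mul (Lit a4) (Var (-1, Qc 1))))))
     (Hpart [] 0)"

definition Omega_term :: "real \<Rightarrow> jet_term \<Rightarrow> jet_term" where
  "Omega_term \<alpha> e = Add (term_deriv (symmetry_field \<alpha>) e) (Mul e (term_deriv total_field (xi_term \<alpha> 0)))"

definition var_term :: "(nat \<Rightarrow> coord) \<Rightarrow> jet_term \<Rightarrow> jet_term" where
  "var_term C e =
     Add (Sub (term_deriv (coord_field (0, C 0)) e)
              (term_deriv total_field (term_deriv (coord_field (0, C 1)) e)))
       (shift_term 1 (Sub (term_deriv (coord_field (-1, C 0)) e)
              (term_deriv total_field (term_deriv (coord_field (-1, C 1)) e))))"

definition varT_term :: "jet_term \<Rightarrow> jet_term" where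
  "varT_term e =
     Sub (Add (Add (term_deriv (coord_field (0, Tc)) e)
       (term_deriv total_field (Add (Mul (Var (0, Qc 1)) (term_deriv (coord_field (0, Qc 1)) e))
                                    (Mul (Var (0, Pc 1)) (term_deriv (coord_field (0, Pc 1)) e)))))
     (shift_term 1 (Add (term_deriv (coord_field (-1, Tc)) e)
       (term_deriv total_field (Add (Mul (Var (-1, Qc 1)) (term_deriv (coord_field (-1, Qc 1)) e))
                                    (Mul (Var (-1, Pc 1)) (term_deriv (coord_field (-1, Pc 1)) e)))))))
     (term_deriv total_field e)"

locale smooth_data =
  fixes H :: "real6 \<Rightarrow> real" and eta nu :: "real3 \<Rightarrow> real" and f :: "real \<Rightarrow> real"
  assumes smooth_H: "smooth_fun H" and smooth_eta: "smooth_fun eta"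
    and smooth_nu: "smooth_fun nu" and smooth_f: "smooth_fun f"
begin

abbreviation val :: "jet_term \<Rightarrow> expr" where
  "val \<equiv> term_val H eta nu f"

lemma DERIV_val_along_line:
  "DERIV (\<lambda>s. val e (\<lambda>v. z v + s * w v)) s :>
    val (term_deriv (\<lambda>v. Lit (w v)) e) (\<lambda>v. z v + s * w v)"
proof (induction e)
  case (Hpart ms l)
  show ?case
    using DERIV_coord_partial6[OF smooth_H, of ms "H_args l z"]
    by (simp add: H_args_along_line H_args_def add.assoc)
next
  case (EtaPart ms l)
  show ?case
    using DERIV_coord_partial3[OF smooth_eta, of ms "tqp_args l z"]
    by (simp add: tqp_args_along_line tqp_args_def add.assoc)
next
  case (NuPart ms l)
  show ?case
    using DERIV_coord_partial3[OF smooth_nu, of ms "tqp_args l z"]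
    by (simp add: tqp_args_along_line tqp_args_def add.assoc)
next
  case (Fderiv k l)
  have "DERIV (\<lambda>s. z (l, Tc) + s * w (l, Tc)) s :> w (l, Tc)"
    by (auto intro!: derivative_eq_intros)
  from DERIV_chain2[OF DERIV_higher_deriv[OF smooth_f] this] show ?case
    by (simp add: mult.commute)
qed (auto intro!: derivative_eq_intros)

lemma deriv_val_along_line:
  "deriv (\<lambda>s. val e (\<lambda>v. z v + s * w v)) s =
    val (term_deriv (\<lambda>v. Lit (w v)) e) (\<lambda>v. z v + s * w v)"
  by (rule DERIV_imp_deriv[OF DERIV_val_along_line])

lemma pd_val: "pd x (val e) = val (term_deriv (coord_field x) e)"
proof
  fix z :: jet
  define z0 where "z0 = z(x := 0)"
  define d where "d = (\<lambda>v. if v = x then 1 else (0::real))"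
  have "z(x := s) = (\<lambda>v. z0 v + s * d v)" for s by (auto simp: z0_def d_def)
  moreover have "(\<lambda>v. z0 v + z x * d v) = z" by (auto simp: z0_def d_def)
  ultimately show "pd x (val e) z = val (term_deriv (coord_field x) e) z"
    unfolding pd_def using deriv_val_along_line[of e z0 d "z x"] by (simp add: coord_field_def d_def)
qed

lemma Dt_val: "Dt (val e) = val (term_deriv total_field e)"
proof
  fix z
  have "Dt (val e) z = val (term_deriv (\<lambda>v. Lit (tdir z v)) e) z"
    unfolding Dt_def using deriv_val_along_line[of e z "tdir z" 0] by simp
  also have "\<dots> = val (term_deriv total_field e) z"
    by (rule term_val_term_deriv_cong) (auto simp: total_field_def tdir_def split: coord.splits)
  finally show "Dt (val e) z = val (term_deriv total_field e) z" .
qed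

lemma xiE_val: "xiE (\<lambda>t. \<alpha> * t + f t) = val (xi_term \<alpha> 0)"
  by (auto simp: xiE_def xi_term_def higher_deriv_def)

lemma prol_val: "prol (xiE (\<lambda>t. \<alpha> * t + f t)) C (val b) k = val (prol_term \<alpha> C b k)"
  by (induction k) (auto simp: xiE_val Dt_val)

lemma tqpE_eta_val: "tqpE eta = val (EtaPart [] 0)"
  by (auto simp: tqpE_def tqp_args_def)

lemma tqpE_nu_val: "tqpE nu = val (NuPart [] 0)"
  by (auto simp: tqpE_def tqp_args_def)

lemma Xop_val: "Xop (\<lambda>t. \<alpha> * t + f t) eta nu (val e) = val (term_deriv (symmetry_field \<alpha>) e)"
proof
  fix z
  let ?w = "Xcoef (\<lambda>t. \<alpha> * t + f t) eta nu z"
  have "Xop (\<lambda>t. \<alpha> * t + f t) eta nu (val e) z = val (term_deriv (\<lambda>v. Lit (?w v)) e) z"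
    unfolding Xop_def using deriv_val_along_line[of e z ?w 0] by simp
  also have "\<dots> = val (term_deriv (symmetry_field \<alpha>) e) z"
  proof (rule term_val_term_deriv_cong)
    fix v :: "int \<times> coord"
    obtain l c where v: "v = (l, c)" by fastforce
    show "val (Lit (?w v)) z = val (symmetry_field \<alpha> v) z"
      using prol_val[of \<alpha> Qc "EtaPart [] 0"] prol_val[of \<alpha> Pc "NuPart [] 0"]
      by (cases c) (auto simp: v symmetry_field_def Xcoef_def xi_term_def higher_deriv_def
          term_val_shift_term tqpE_eta_val tqpE_nu_val)
  qed
  finally show "Xop (\<lambda>t. \<alpha> * t + f t) eta nu (val e) z = val (term_deriv (symmetry_field \<alpha>) e) z" .
qed

lemma Htil_val: "Htil a1 a2 a3 a4 H = val (Htil_term a1 a2 a3 a4)"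
  by (auto simp: Htil_def Htil_term_def H_args_def)

lemma Omega_val: "Omega (\<lambda>t. \<alpha> * t + f t) eta nu (val e) = val (Omega_term \<alpha> e)"
  by (auto simp: Omega_def Omega_term_def Xop_val xiE_val Dt_val)

lemma varP_val: "varP (val e) = val (var_term Pc e)"
  by (auto simp: varP_def var_term_def pd_val Dt_val Splus_def term_val_shift_term)

lemma varQ_val: "varQ (val e) = val (var_term Qc e)"
  by (auto simp: varQ_def var_term_def pd_val Dt_val Splus_def term_val_shift_term)

lemma varT_val: "varT (val e) = val (varT_term e)"
proof -
  have "(\<lambda>w. w (l, Qc 1) * val a w + w (l, Pc 1) * val b w)
      = val (Add (Mul (Var (l, Qc 1)) a) (Mul (Var (l, Pc 1)) b))" for a b l
    by auto
  then show ?thesis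
    unfolding varT_def pd_val Dt_val
    by (auto simp: varT_term_def Splus_def term_val_shift_term shift_def Dt_val)
qed

lemma Omega_variational_identities:
  fixes a1 a2 a3 a4 :: real
  assumes periodic: "\<forall>t. f (t + \<tau>) = f t"
    and "z (-1, Tc) = z (0, Tc) - \<tau>" and "z (1, Tc) = z (0, Tc) + \<tau>"
  defines "Ht \<equiv> Htil_term a1 a2 a3 a4"
  shows "val (var_term Pc (Omega_term \<alpha> Ht)) z
      = val (term_deriv (symmetry_field \<alpha>) (var_term Pc Ht)) z
      + val (term_deriv (coord_field (0, Pc 0)) (EtaPart [] 0)) z * val (var_term Qc Ht) z
      + (val (term_deriv (coord_field (0, Pc 0)) (NuPart [] 0)) z
         + val (term_deriv total_field (xi_term \<alpha> 0)) z) * val (var_term Pc Ht) z"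
    and "val (var_term Qc (Omega_term \<alpha> Ht)) z
      = val (term_deriv (symmetry_field \<alpha>) (var_term Qc Ht)) z
      + (val (term_deriv (coord_field (0, Qc 0)) (EtaPart [] 0)) z
         + val (term_deriv total_field (xi_term \<alpha> 0)) z) * val (var_term Qc Ht) z
      + val (term_deriv (coord_field (0, Qc 0)) (NuPart [] 0)) z * val (var_term Pc Ht) z"
    and "val (varT_term (Omega_term \<alpha> Ht)) z
      = val (term_deriv (symmetry_field \<alpha>) (varT_term Ht)) z
      + 2 * val (term_deriv total_field (xi_term \<alpha> 0)) z * val (varT_term Ht) z
      + val (term_deriv (coord_field (0, Tc)) (EtaPart [] 0)) z * val (var_term Qc Ht) z
      + val (term_deriv (coord_field (0, Tc)) (NuPart [] 0)) z * val (var_term Pc Ht) z"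
  using assms(2,3) unfolding Ht_def
  by (simp_all add: var_term_def varT_term_def Omega_term_def Htil_term_def symmetry_field_def
      total_field_def coord_field_def xi_term_def
      higher_deriv_periodic[OF smooth_f periodic] higher_deriv_periodic_minus[OF smooth_f periodic]
      coord_partial_commute[OF range_basis6 smooth_H] coord_partial_commute[OF range_basis3 smooth_eta]
      coord_partial_commute[OF range_basis3 smooth_nu])
    (simp_all add: algebra_simps)

end

theorem lemma3:
  fixes a1 a2 a3 a4 \<alpha> \<tau> :: real
    and H :: "real \<times> real \<times> real \<times> real \<times> real \<times> real \<Rightarrow> real"
    and eta nu :: "real \<times> real \<times> real \<Rightarrow> real"
    and f xi :: "real \<Rightarrow> real"
  assumes "\<tau> > 0"
    and "smooth_fun H" and "smooth_fun eta" and "smooth_fun nu" and "smooth_fun f"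
    and "\<forall>t. f (t + \<tau>) = f t"
    and "\<forall>t. xi t = \<alpha> * t + f t"
  shows "\<forall>z. z (-1, Tc) = z (0, Tc) - \<tau> \<and> z (1, Tc) = z (0, Tc) + \<tau> \<longrightarrow>
     (let Ht = Htil a1 a2 a3 a4 H;
          Om = Omega xi eta nu Ht;
          X = Xop xi eta nu;
          xidot = Dt (xiE xi) z
      in varP Om z = X (varP Ht) z
            + pd (0, Pc 0) (tqpE eta) z * varQ Ht z
            + (pd (0, Pc 0) (tqpE nu) z + xidot) * varP Ht z
       \<and> varQ Om z = X (varQ Ht) z
            + (pd (0, Qc 0) (tqpE eta) z + xidot) * varQ Ht z
            + pd (0, Qc 0) (tqpE nu) z * varP Ht z
       \<and> varT Om z = X (varT Ht) z
            + 2 * xidot * varT Ht z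
            + pd (0, Tc) (tqpE eta) z * varQ Ht z
            + pd (0, Tc) (tqpE nu) z * varP Ht z)"
proof -
  interpret smooth_data H eta nu f
    using assms(2-5) by unfold_locales
  have xi: "xi = (\<lambda>t. \<alpha> * t + f t)"
    using assms(7) by auto
  show ?thesis
    unfolding Let_def xi Htil_val Omega_val varP_val varQ_val varT_val Xop_val
      tqpE_eta_val tqpE_nu_val pd_val xiE_val Dt_val
    using Omega_variational_identities[OF assms(6)] by blast
qed

end
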